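(* Let $A\subseteq(0,\infty)$ be an open interval, let $n\ge 0$ be an integer, and let $f:A\to(0,\infty)$ be $n+1$ times Bigeometrically differentiable on $A$. Then for any $x,x+h\in A$ there exists a number $\theta\in(0,1)$ such that $$f(x+h)=\prod_{i=0}^{n}\left(f^{\pi(i)}(x)\right)^{\frac{\left(\ln\left(1+\frac{h}{x}\right)\right)^{i}}{i!}}\cdot\left(f^{\pi(n+1)}(x+\theta h)\right)^{\frac{\left(\ln\left(1+\frac{h}{x}\right)\right)^{n+1}}{(n+1)!}}.$$
   Context: For a positive differentiable function $g$, the Bigeometric derivative is $g^{\pi}(x)=\lim_{h\to0}\bigl(g((1+h)x)/g(x)\bigr)^{1/h}=\exp\{x\,g'(x)/g(x)\}$. Higher-order Bigeometric derivatives are defined by iteration: $f^{\pi(0)}=f$, $f^{\pi(k+1)}=(f^{\pi(k)})^{\pi}$; "$n+1$ times Bigeometrically differentiable" means these exist up to order $n+1$. *)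

theory Defs
  imports "HOL-Analysis.Analysis"
begin

definition bigeo_deriv :: "(real \<Rightarrow> real) \<Rightarrow> real \<Rightarrow> real" where
  "bigeo_deriv g x = Lim (at 0) (\<lambda>h. (g ((1 + h) * x) / g x) powr (1 / h))"

fun bigeo_iter :: "(real \<Rightarrow> real) \<Rightarrow> nat \<Rightarrow> real \<Rightarrow> real" where
  "bigeo_iter f 0 = f"
| "bigeo_iter f (Suc k) = bigeo_deriv (bigeo_iter f k)"

text \<open>f is m times Bigeometrically differentiable on A: for every k < m the function
  f^pi(k) is positive and differentiable at each point of A (so f^pi(k+1) exists there).\<close>
definition bigeo_differentiable_on :: "nat \<Rightarrow> (real \<Rightarrow> real) \<Rightarrow> real set \<Rightarrow> bool" where
  "bigeo_differentiable_on m f A \<longleftrightarrow>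
     (\<forall>k<m. \<forall>y\<in>A. bigeo_iter f k y > 0 \<and> bigeo_iter f k differentiable (at y))"

end

theory Submission
  imports Defs
begin

text \<open>In log-log coordinates \<open>\<phi>\<^sub>k(u) = ln (f\<^sup>\<pi>\<^sup>k (exp u))\<close> the Bigeometric
  derivative becomes the ordinary one: \<open>\<phi>\<^sub>k' = \<phi>\<^sub>k\<^sub>+\<^sub>1\<close>. Ordinary Taylor expansion of \<open>\<phi>\<^sub>0\<close>
  from \<open>ln x\<close> to \<open>ln (x + h) = ln x + ln (1 + h/x)\<close> with Lagrange remainder at some
  \<open>ln (x + \<theta> h)\<close>, exponentiated, is the claimed product formula.\<close>

lemma bigeo_deriv_eq_exp:
  assumes gp: "g y > 0" and gd: "g differentiable (at y)"
  shows "bigeo_deriv g y = exp (y * deriv g y / g y)"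
proof -
  have Dg: "(g has_real_derivative deriv g y) (at y)"
    using gd DERIV_deriv_iff_real_differentiable by blast
  define \<phi> where "\<phi> = (\<lambda>h. ln (g ((1 + h) * y)))"
  have "((\<lambda>h. (1 + h) * y) has_real_derivative y) (at 0)"
    by (auto intro!: derivative_eq_intros)
  from DERIV_chain2[of g, OF _ this] Dg
  have Dcomp: "((\<lambda>h. g ((1 + h) * y)) has_real_derivative deriv g y * y) (at 0)"
    by simp
  have "(\<phi> has_real_derivative y * deriv g y / g y) (at 0)"
    using DERIV_chain2[OF DERIV_ln[of "g ((1 + 0) * y)"] Dcomp] gp
    by (simp add: \<phi>_def field_simps)
  hence "((\<lambda>h. exp ((\<phi> h - \<phi> 0) / h)) \<longlongrightarrow> exp (y * deriv g y / g y)) (at 0)"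
    unfolding DERIV_def by (auto intro: tendsto_exp)
  moreover have "\<forall>\<^sub>F h in at 0. g ((1 + h) * y) > 0"
  proof -
    have "((\<lambda>h. g ((1 + h) * y)) \<longlongrightarrow> g y) (at 0)"
      using DERIV_isCont[OF Dcomp] by (simp add: isCont_def)
    thus ?thesis using order_tendstoD(1) gp by blast
  qed
  hence "\<forall>\<^sub>F h in at 0. exp ((\<phi> h - \<phi> 0) / h) = (g ((1 + h) * y) / g y) powr (1 / h)"
    by eventually_elim (use gp in \<open>simp add: \<phi>_def powr_def ln_div\<close>)
  ultimately have "((\<lambda>h. (g ((1 + h) * y) / g y) powr (1 / h)) \<longlongrightarrow> exp (y * deriv g y / g y)) (at 0)"
    using tendsto_cong by fastforce
  thus ?thesis unfolding bigeo_deriv_def by (rule tendsto_Lim[rotated]) simp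
qed

lemma DERIV_ln_exp_bigeo_deriv:
  assumes "g (exp t) > 0" and "g differentiable (at (exp t))"
  shows "((\<lambda>t. ln (g (exp t))) has_real_derivative ln (bigeo_deriv g (exp t))) (at t)"
proof -
  have "(g has_real_derivative deriv g (exp t)) (at (exp t))"
    using assms(2) DERIV_deriv_iff_real_differentiable by blast
  from DERIV_chain2[OF this DERIV_exp]
  have "((\<lambda>t. g (exp t)) has_real_derivative deriv g (exp t) * exp t) (at t)" .
  from DERIV_chain2[OF DERIV_ln[OF assms(1)] this] show ?thesis
    using bigeo_deriv_eq_exp[OF assms] by (simp add: field_simps)
qed

lemma bigeo_iter_pos:
  assumes "bigeo_differentiable_on (Suc n) f A" and "k \<le> Suc n" and "y \<in> A"
  shows "bigeo_iter f k y > 0"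
proof (cases "k = Suc n")
  case True
  with assms show ?thesis
    by (simp add: bigeo_differentiable_on_def bigeo_deriv_eq_exp)
next
  case False
  with assms show ?thesis by (simp add: bigeo_differentiable_on_def)
qed

lemma exp_mem_interval_between_ln:
  fixes x y t :: real
  assumes "is_interval A" and "x \<in> A" and "y \<in> A" and "x > 0" and "y > 0"
    and "min (ln x) (ln y) \<le> t" and "t \<le> max (ln x) (ln y)"
  shows "exp t \<in> A"
proof -
  have "min x y = exp (min (ln x) (ln y))" "max x y = exp (max (ln x) (ln y))"
    using assms(4,5) by (auto simp: min_def max_def)
  with assms(6,7) have "min x y \<le> exp t" "exp t \<le> max x y"
    by simp_all
  moreover have "min x y \<in> A" "max x y \<in> A"
    using assms(2,3) by (auto simp: min_def max_def)
  ultimately show ?thesis using assms(1) is_interval_1 by blast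
qed

lemma strictly_between_eq_affine:
  fixes x y z :: real
  assumes "if y < x then y < z \<and> z < x else x < z \<and> z < y"
  shows "\<exists>\<theta>. 0 < \<theta> \<and> \<theta> < 1 \<and> z = x + \<theta> * (y - x)"
proof -
  have "x \<noteq> y" using assms by (auto split: if_splits)
  with assms show ?thesis
    by (intro exI[of _ "(z - x) / (y - x)"]) (auto simp: field_simps split: if_splits)
qed

lemma ln_bigeo_taylor:
  assumes "is_interval A" and "A \<subseteq> {0<..}"
    and diff: "bigeo_differentiable_on (Suc n) f A"
    and "x \<in> A" and "x + h \<in> A"
  defines "s \<equiv> ln (1 + h / x)"
  shows "\<exists>\<theta>. 0 < \<theta> \<and> \<theta> < 1 \<and> x + \<theta> * h \<in> A \<and>
    ln (f (x + h)) = (\<Sum>i\<le>n. ln (bigeo_iter f i x) * s ^ i / fact i)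
      + ln (bigeo_iter f (Suc n) (x + \<theta> * h)) * s ^ Suc n / fact (Suc n)"
proof (cases "h = 0")
  case True
  have "x + h / 2 \<in> A" using True assms(4) by simp
  with True show ?thesis
    by (intro exI[of _ "1/2"]) (simp add: s_def sum.atMost_shift)
next
  case False
  have x0: "x > 0" and xh0: "x + h > 0" using assms(2,4,5) by auto
  have "1 + h / x = (x + h) / x" using x0 by (simp add: field_simps)
  hence s: "s = ln (x + h) - ln x"
    using x0 xh0 by (simp add: s_def ln_div)
  define \<phi> where "\<phi> = (\<lambda>k t. ln (bigeo_iter f k (exp t)))"
  have in_A: "exp t \<in> A" if "min (ln x) (ln (x + h)) \<le> t" "t \<le> max (ln x) (ln (x + h))" for t
    using exp_mem_interval_between_ln[OF assms(1,4,5) x0 xh0 that] .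
  have "DERIV (\<phi> k) t :> \<phi> (Suc k) t"
    if "k < Suc n" "min (ln x) (ln (x + h)) \<le> t" "t \<le> max (ln x) (ln (x + h))" for k t
  proof -
    have "exp t \<in> A" using in_A that(2,3) .
    with diff \<open>k < Suc n\<close> have "bigeo_iter f k (exp t) > 0" "bigeo_iter f k differentiable (at (exp t))"
      unfolding bigeo_differentiable_on_def by blast+
    from DERIV_ln_exp_bigeo_deriv[OF this] show ?thesis by (simp add: \<phi>_def)
  qed
  hence "\<forall>k t. k < Suc n \<and> min (ln x) (ln (x + h)) \<le> t \<and> t \<le> max (ln x) (ln (x + h))
      \<longrightarrow> DERIV (\<phi> k) t :> \<phi> (Suc k) t"
    by blast
  from Taylor[OF _ _ this, of "\<phi> 0" "ln x" "ln (x + h)"]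
  obtain t where t: "if ln (x + h) < ln x then ln (x + h) < t \<and> t < ln x else ln x < t \<and> t < ln (x + h)"
    and taylor: "\<phi> 0 (ln (x + h)) = (\<Sum>k<Suc n. \<phi> k (ln x) / fact k * s ^ k)
      + \<phi> (Suc n) t / fact (Suc n) * s ^ Suc n"
    using False x0 xh0 s by auto
  have "if x + h < x then x + h < exp t \<and> exp t < x else x < exp t \<and> exp t < x + h"
    using t exp_less_mono[of "ln x" t] exp_less_mono[of t "ln x"]
      exp_less_mono[of "ln (x + h)" t] exp_less_mono[of t "ln (x + h)"] x0 xh0
    by (simp split: if_splits)
  then obtain \<theta> where \<theta>: "0 < \<theta>" "\<theta> < 1" "exp t = x + \<theta> * h"
    using strictly_between_eq_affine[where x = x and y = "x + h"] by auto
  have "exp t \<in> A" using in_A t by (auto split: if_splits)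
  with \<theta> taylor x0 xh0 show ?thesis
    by (intro exI[of _ \<theta>]) (simp add: \<phi>_def lessThan_Suc_atMost)
qed

theorem theorem3:
  fixes A :: "real set" and f :: "real \<Rightarrow> real" and n :: nat and x h :: real
  assumes "open A" and "is_interval A" and "A \<subseteq> {0<..}"
    and "\<forall>y\<in>A. f y > 0"
    and "bigeo_differentiable_on (n + 1) f A"
    and "x \<in> A" and "x + h \<in> A"
  shows "\<exists>\<theta>. 0 < \<theta> \<and> \<theta> < 1 \<and>
    f (x + h) =
      (\<Prod>i\<le>n. (bigeo_iter f i x) powr ((ln (1 + h / x)) ^ i / fact i)) *
      (bigeo_iter f (n + 1) (x + \<theta> * h)) powr ((ln (1 + h / x)) ^ (n + 1) / fact (n + 1))"
proof -
  let ?s = "ln (1 + h / x)"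
  have diff: "bigeo_differentiable_on (Suc n) f A" using assms(5) by simp
  obtain \<theta> where \<theta>: "0 < \<theta>" "\<theta> < 1" "x + \<theta> * h \<in> A"
    and taylor: "ln (f (x + h)) = (\<Sum>i\<le>n. ln (bigeo_iter f i x) * ?s ^ i / fact i)
      + ln (bigeo_iter f (Suc n) (x + \<theta> * h)) * ?s ^ Suc n / fact (Suc n)"
    using ln_bigeo_taylor[OF assms(2,3) diff assms(6,7)] by blast
  have pos: "bigeo_iter f i x > 0" if "i \<le> n" for i
    using bigeo_iter_pos[OF diff _ assms(6)] that by simp
  have pos_rem: "bigeo_iter f (Suc n) (x + \<theta> * h) > 0"
    using bigeo_iter_pos[OF diff order_refl \<theta>(3)] .
  have "f (x + h) = exp (ln (f (x + h)))" using assms(4,7) by simp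
  also have "\<dots> = (\<Prod>i\<le>n. exp (ln (bigeo_iter f i x) * ?s ^ i / fact i))
      * exp (ln (bigeo_iter f (Suc n) (x + \<theta> * h)) * ?s ^ Suc n / fact (Suc n))"
    unfolding taylor by (simp add: exp_add exp_sum)
  also have "\<dots> = (\<Prod>i\<le>n. bigeo_iter f i x powr (?s ^ i / fact i))
      * bigeo_iter f (Suc n) (x + \<theta> * h) powr (?s ^ Suc n / fact (Suc n))"
    using pos pos_rem by (force simp: powr_def mult_ac simp del: bigeo_iter.simps intro!: prod.cong)
  finally show ?thesis using \<theta> by auto
qed

end
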